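(* Let $\mathbb{H}^n$ be $\mathbb{R}^n$ or $\mathbb{C}^n$. The family of all $m$-element frames on $\mathbb{H}^n$ that are injective is open in the space of all $m$-element frames on $\mathbb{H}^n$, with respect to the distance $d$.
   Context: A family $\{x_k\}$ of vectors in a Hilbert space is called injective if whenever a self-adjoint operator $T$ satisfies $\langle Tx_k,x_k\rangle=0$ for all $k$, then $T=0$. For $m$-element frames $\mathcal{X}=\{x_k\}_{k=1}^m$ and $\mathcal{Y}=\{y_k\}_{k=1}^m$, the distance is $d(\mathcal{X},\mathcal{Y})^2=\sum_{k=1}^m\|x_k-y_k\|^2$. *)

theory Defs
  imports "HOL-Analysis.Analysis"
begin

text \<open>The scalar field H is R or C. Both are modelled inside complex:
  K = \<real> (real scalars) or K = UNIV (complex scalars).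
  Vectors of H^n are vectors in complex^'n with all coordinates in K.\<close>

definition hvec :: "complex set \<Rightarrow> (complex ^ 'n) set" where
  "hvec K = {x. \<forall>i. x $ i \<in> K}"

definition hinner :: "complex ^ 'n \<Rightarrow> complex ^ 'n \<Rightarrow> complex" where
  "hinner x y = (\<Sum>i\<in>UNIV. x $ i * cnj (y $ i))"

definition self_adjoint_op :: "complex set \<Rightarrow> complex ^ 'n ^ 'n \<Rightarrow> bool" where
  "self_adjoint_op K T \<longleftrightarrow> (\<forall>i j. T $ i $ j \<in> K \<and> T $ i $ j = cnj (T $ j $ i))"

text \<open>A family (x_k) indexed by the finite type 'm (so m = CARD('m)) is a frame
  for H^n if it consists of vectors of H^n and satisfies the frame inequalities.\<close>
definition is_frame :: "complex set \<Rightarrow> ('m::finite \<Rightarrow> complex ^ 'n) \<Rightarrow> bool" where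
  "is_frame K X \<longleftrightarrow> (\<forall>k. X k \<in> hvec K) \<and>
     (\<exists>A B. 0 < A \<and> A \<le> B \<and>
        (\<forall>x\<in>hvec K. A * (norm x)\<^sup>2 \<le> (\<Sum>k\<in>UNIV. (cmod (hinner x (X k)))\<^sup>2) \<and>
                     (\<Sum>k\<in>UNIV. (cmod (hinner x (X k)))\<^sup>2) \<le> B * (norm x)\<^sup>2))"

definition injective_family :: "complex set \<Rightarrow> ('m::finite \<Rightarrow> complex ^ 'n) \<Rightarrow> bool" where
  "injective_family K X \<longleftrightarrow>
     (\<forall>T :: complex ^ 'n ^ 'n. self_adjoint_op K T \<and> (\<forall>k. hinner (T *v X k) (X k) = 0)
        \<longrightarrow> T = 0)"

definition frame_dist :: "('m::finite \<Rightarrow> complex ^ 'n) \<Rightarrow> ('m \<Rightarrow> complex ^ 'n) \<Rightarrow> real" where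
  "frame_dist X Y = sqrt (\<Sum>k\<in>UNIV. (norm (X k - Y k))\<^sup>2)"

end

theory Submission imports Defs begin

text \<open>A family X fails to be injective exactly when some self-adjoint T of norm 1 makes all
  quadratic forms at the vectors of X vanish. The pairs (T, X) with vanishing quadratic forms
  form a closed set and the self-adjoint operators of norm 1 a compact one, so projecting away T
  shows that the non-injective families are closed. The frame distance is the Euclidean distance
  of the families viewed as single vectors.\<close>

lemma closed_self_adjoint_op:
  assumes "closed K"
  shows "closed {T :: complex^'n^'n. self_adjoint_op K T}"
proof -
  have "closed {T :: complex^'n^'n. T $ i $ j \<in> K}" for i j
    using closed_vimage_vec_nth[OF closed_vimage_vec_nth[OF assms, of j], of i]
    by (simp add: vimage_def)
  then show ?thesis
    unfolding self_adjoint_op_def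
    by (intro closed_Collect_all closed_Collect_conj closed_Collect_eq)
      (auto intro!: continuous_intros continuous_on_component)
qed

lemma compact_unit_self_adjoint_op:
  assumes "closed K"
  shows "compact {T :: complex^'n^'n. self_adjoint_op K T \<and> norm T = 1}"
proof -
  have "{T :: complex^'n^'n. self_adjoint_op K T \<and> norm T = 1} =
      {T. self_adjoint_op K T} \<inter> sphere 0 1"
    by auto
  then show ?thesis
    using closed_Int_compact[OF closed_self_adjoint_op[OF assms] compact_sphere] by simp
qed

lemma matrix_scaleR_component:
  "(c *\<^sub>R T) $ i $ j = complex_of_real c * (T :: complex^'n^'m) $ i $ j"
  unfolding vector_scaleR_component by (rule scaleR_conv_of_real)

lemma self_adjoint_op_scaleR:
  assumes "\<And>c z. z \<in> K \<Longrightarrow> complex_of_real c * z \<in> K" and "self_adjoint_op K T"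
  shows "self_adjoint_op K (c *\<^sub>R T)"
  unfolding self_adjoint_op_def
proof (intro allI conjI)
  fix i j
  have T_ij: "T $ i $ j \<in> K" "T $ i $ j = cnj (T $ j $ i)"
    using assms(2) unfolding self_adjoint_op_def by blast+
  show "(c *\<^sub>R T) $ i $ j \<in> K"
    unfolding matrix_scaleR_component by (rule assms(1)[OF T_ij(1)])
  show "(c *\<^sub>R T) $ i $ j = cnj ((c *\<^sub>R T) $ j $ i)"
    unfolding matrix_scaleR_component by (subst T_ij(2)) simp
qed

lemma hinner_scaleR_matrix_vector:
  "hinner ((c *\<^sub>R T) *v v) v = complex_of_real c * hinner (T *v v) (v :: complex^'n)"
  unfolding hinner_def matrix_vector_mult_def matrix_scaleR_component
  by (simp add: sum_distrib_left sum_distrib_right mult.assoc)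

lemma closed_annihilating_pairs:
  "closed {(T :: complex^'n^'n, x :: (complex^'n)^'m::finite).
      \<forall>k. hinner (T *v (x $ k)) (x $ k) = 0}"
proof -
  have "continuous_on UNIV (\<lambda>p :: (complex^'n^'n) \<times> ((complex^'n)^'m).
      hinner (fst p *v (snd p $ k)) (snd p $ k))" for k
    unfolding hinner_def matrix_vector_mult_def
    by (intro continuous_intros continuous_on_component)
  then show ?thesis
    unfolding case_prod_beta
    by (intro closed_Collect_all closed_Collect_eq continuous_on_const)
qed

lemma injective_family_iff_no_unit_annihilator:
  fixes X :: "'m::finite \<Rightarrow> complex^'n"
  assumes "\<And>c z. z \<in> K \<Longrightarrow> complex_of_real c * z \<in> K"
  shows "injective_family K X \<longleftrightarrow>
    \<not> (\<exists>T :: complex^'n^'n. self_adjoint_op K T \<and> norm T = 1 \<and> (\<forall>k. hinner (T *v X k) (X k) = 0))"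
proof
  assume "injective_family K X"
  then show "\<not> (\<exists>T :: complex^'n^'n. self_adjoint_op K T \<and> norm T = 1 \<and> (\<forall>k. hinner (T *v X k) (X k) = 0))"
    unfolding injective_family_def by force
next
  assume no_unit: "\<not> (\<exists>T :: complex^'n^'n. self_adjoint_op K T \<and> norm T = 1 \<and> (\<forall>k. hinner (T *v X k) (X k) = 0))"
  show "injective_family K X"
    unfolding injective_family_def
  proof (intro allI impI)
    fix T :: "complex^'n^'n"
    assume T: "self_adjoint_op K T \<and> (\<forall>k. hinner (T *v X k) (X k) = 0)"
    show "T = 0"
    proof (rule ccontr)
      assume "T \<noteq> 0"
      let ?T1 = "(1 / norm T) *\<^sub>R T"
      have "self_adjoint_op K ?T1"
        using T self_adjoint_op_scaleR[OF assms] by blast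
      moreover have "norm ?T1 = 1"
        using \<open>T \<noteq> 0\<close> by simp
      moreover have "\<forall>k. hinner (?T1 *v X k) (X k) = 0"
        using T by (simp only: hinner_scaleR_matrix_vector) simp
      ultimately have "\<exists>T :: complex^'n^'n. self_adjoint_op K T \<and> norm T = 1 \<and> (\<forall>k. hinner (T *v X k) (X k) = 0)"
        by blast
      with no_unit show False by contradiction
    qed
  qed
qed

lemma open_injective_families:
  assumes "closed K" and "\<And>c z. z \<in> K \<Longrightarrow> complex_of_real c * z \<in> K"
  shows "open {x :: (complex^'n)^'m::finite. injective_family K (\<lambda>k. x $ k)}"
proof -
  let ?U = "{T :: complex^'n^'n. self_adjoint_op K T \<and> norm T = 1}"
  let ?Z = "{(T :: complex^'n^'n, x :: (complex^'n)^'m). \<forall>k. hinner (T *v (x $ k)) (x $ k) = 0}"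
  have "closed {x. \<exists>T. T \<in> ?U \<and> (T, x) \<in> ?Z}"
    by (rule closed_compact_projection[OF compact_unit_self_adjoint_op[OF assms(1)]
          closed_annihilating_pairs])
  moreover have "{x :: (complex^'n)^'m. injective_family K (\<lambda>k. x $ k)} =
      - {x. \<exists>T. T \<in> ?U \<and> (T, x) \<in> ?Z}"
    using injective_family_iff_no_unit_annihilator[OF assms(2)] by auto
  ultimately show ?thesis
    by (simp add: open_Compl)
qed

lemma frame_dist_eq_dist: "frame_dist X Y = dist (\<chi> k. X k) (\<chi> k. Y k)"
  unfolding frame_dist_def dist_norm norm_vec_def L2_set_def by simp

theorem mainTheorem6:
  fixes K :: "complex set"
  assumes "K = \<real> \<or> K = UNIV"
    and "is_frame K (X :: 'm::finite \<Rightarrow> complex ^ 'n)"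
    and "injective_family K X"
  shows "\<exists>e>0. \<forall>Y :: 'm \<Rightarrow> complex ^ 'n.
           is_frame K Y \<and> frame_dist X Y < e \<longrightarrow> injective_family K Y"
proof -
  have "closed K"
    using assms(1) closed_complex_Reals by auto
  moreover have "\<And>c z. z \<in> K \<Longrightarrow> complex_of_real c * z \<in> K"
    using assms(1) by auto
  ultimately have "open {x :: (complex^'n)^'m. injective_family K (\<lambda>k. x $ k)}"
    by (rule open_injective_families)
  moreover have "(\<chi> k. X k) \<in> {x. injective_family K (\<lambda>k. x $ k)}"
    using assms(3) by (simp add: vec_lambda_inverse)
  ultimately obtain e where "e > 0" and e: "ball (\<chi> k. X k) e \<subseteq> {x. injective_family K (\<lambda>k. x $ k)}"
    using open_contains_ball by blast
  show ?thesis
  proof (intro exI[of _ e] conjI allI impI \<open>e > 0\<close>)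
    fix Y :: "'m \<Rightarrow> complex^'n"
    assume "is_frame K Y \<and> frame_dist X Y < e"
    then have "(\<chi> k. Y k) \<in> ball (\<chi> k. X k) e"
      by (simp add: frame_dist_eq_dist)
    with e show "injective_family K Y"
      by (auto simp: vec_lambda_inverse)
  qed
qed

end
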